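(* Let $\psi,\phi\in\mathbf{\Psi}_n$, and $\bar\phi(t):=\phi(t_1,\ldots,t_{n-1},0)$ for $t:=(t_1,\ldots,t_{n-1})\in\Omega_{n-1}$. Then there exists a $\kappa>0$ such that $$\max\{|\!|\!|(x_1,\ldots,x_{n-1})|\!|\!|_{\bar\phi},\ |\!|\!|(x_n,\ldots,x_{n})|\!|\!|_{\bar\phi},\ \|x_n\|\}\le \kappa\cdot|\!|\!|x|\!|\!|_\psi$$ for all $x:=(x_1,\ldots,x_n)\in X^n$.
   Context: Let $(X,\|\cdot\|)$ be a normed vector space, $n\ge2$. $\Omega_k:=\{t\in\mathbb{R}^k\mid t_i\ge0,\ \sum_i t_i=1\}$, $\Omega_k^\circ:=\{t\in\Omega_k\mid t_i<1\ \forall i\}$. $\mathbf{\Psi}_k$ is the class of convex continuous $\psi:\Omega_k\to\mathbb{R}$ with (B1) $\psi(\mathbf{e}_i)=1$ for all standard unit vectors $\mathbf{e}_i$ and (B2) $\psi(t)\ge(1-t_i)\psi\big(\frac{t_1}{1-t_i},\ldots,\frac{t_{i-1}}{1-t_i},0,\frac{t_{i+1}}{1-t_i},\ldots,\frac{t_k}{1-t_i}\big)$ for all $t\in\Omega_k^\circ$, $i=1,\ldots,k$. For $\psi\in\mathbf{\Psi}_k$, $|\!|\!|x|\!|\!|_\psi:=\big(\sum_{i}\|x_i\|\big)\,\psi\big(\frac{\|x_1\|}{\sum_{i}\|x_i\|},\ldots,\frac{\|x_k\|}{\sum_{i}\|x_i\|}\big)$ for $0\ne x\in X^k$, $|\!|\!|0|\!|\!|_\psi:=0$.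 One has $\bar\phi\in\mathbf{\Psi}_{n-1}$; in $|\!|\!|(x_n,\ldots,x_n)|\!|\!|_{\bar\phi}$ the vector $x_n$ is repeated $n-1$ times. *)

theory Defs
  imports "HOL-Analysis.Analysis"
begin

(* Points of R^k are represented as functions nat => real, with coordinates
   indexed 0..k-1 (paper's t_1..t_k), and required to vanish at indices >= k. *)

definition Omega :: "nat \<Rightarrow> (nat \<Rightarrow> real) set" where
  "Omega k = {t. (\<forall>i<k. 0 \<le> t i) \<and> (\<Sum>i<k. t i) = 1 \<and> (\<forall>i\<ge>k. t i = 0)}"

definition Omega_int :: "nat \<Rightarrow> (nat \<Rightarrow> real) set" where
  "Omega_int k = {t \<in> Omega k. \<forall>i<k. t i < 1}"

definition unitv :: "nat \<Rightarrow> nat \<Rightarrow> real" where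
  "unitv i = (\<lambda>j. if j = i then 1 else 0)"

(* convexity on the Omega, written out (functions nat => real carry no vector-space instance) *)
definition convex_on_Omega :: "nat \<Rightarrow> ((nat \<Rightarrow> real) \<Rightarrow> real) \<Rightarrow> bool" where
  "convex_on_Omega k \<psi> \<longleftrightarrow>
     (\<forall>s\<in>Omega k. \<forall>t\<in>Omega k. \<forall>a::real. 0 \<le> a \<and> a \<le> 1 \<longrightarrow>
        \<psi> (\<lambda>i. a * s i + (1 - a) * t i) \<le> a * \<psi> s + (1 - a) * \<psi> t)"

definition Psi :: "nat \<Rightarrow> ((nat \<Rightarrow> real) \<Rightarrow> real) set" where
  "Psi k = {\<psi>. convex_on_Omega k \<psi> \<and> continuous_on (Omega k) \<psi>
      \<and> (\<forall>i<k. \<psi> (unitv i) = 1)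
      \<and> (\<forall>t\<in>Omega_int k. \<forall>i<k.
            \<psi> t \<ge> (1 - t i) * \<psi> (\<lambda>j. if j = i then 0 else t j / (1 - t i)))}"

(* |||(x_1,...,x_k)|||_psi, x given as nat => 'a using indices 0..k-1 *)
definition psi_norm :: "nat \<Rightarrow> ((nat \<Rightarrow> real) \<Rightarrow> real) \<Rightarrow> (nat \<Rightarrow> 'a::real_normed_vector) \<Rightarrow> real" where
  "psi_norm k \<psi> x =
     (let s = (\<Sum>i<k. norm (x i)) in
      if s = 0 then 0 else s * \<psi> (\<lambda>i. if i < k then norm (x i) / s else 0))"

definition phibar :: "nat \<Rightarrow> ((nat \<Rightarrow> real) \<Rightarrow> real) \<Rightarrow> (nat \<Rightarrow> real) \<Rightarrow> real" where
  "phibar n \<phi> = (\<lambda>t. \<phi> (\<lambda>i. if i < n - 1 then t i else 0))"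

end

theory Submission
  imports Defs
begin

text \<open>Every \<open>\<psi> \<in> \<Psi>\<^sub>n\<close> satisfies \<open>max\<^sub>j t\<^sub>j \<le> \<psi>(t) \<le> 1\<close> on the simplex: writing
  \<open>t = t\<^sub>i e\<^sub>i + (1 - t\<^sub>i) t'\<close>, where \<open>t'\<close> is \<open>t\<close> with the \<open>i\<close>-th coordinate removed and renormalised,
  convexity gives the upper bound and (B2) the lower bound, by induction on the number of nonzero
  coordinates. Hence \<open>\<psi> \<ge> 1/n\<close>, so \<open>|||x|||\<^sub>\<psi>\<close> is at least \<open>1/n\<close> times \<open>\<Sum>\<^sub>i \<parallel>x\<^sub>i\<parallel>\<close>.
  On the other hand \<open>phibar n \<phi>\<close> agrees with \<open>\<phi>\<close> on \<open>\<Omega>\<^sub>n\<^sub>-\<^sub>1 \<subseteq> \<Omega>\<^sub>n\<close>, so it is bounded by 1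
  and both \<open>phibar\<close>-norms are dominated by sums of norms. Thus \<open>\<kappa> = n(n-1)\<close> works.\<close>

definition simplex_support :: "nat \<Rightarrow> (nat \<Rightarrow> real) \<Rightarrow> nat set" where
  "simplex_support n t = {i. i < n \<and> t i \<noteq> 0}"

definition remove_coord :: "(nat \<Rightarrow> real) \<Rightarrow> nat \<Rightarrow> nat \<Rightarrow> real" where
  "remove_coord t i = (\<lambda>j. if j = i then 0 else t j / (1 - t i))"

lemma finite_simplex_support [simp]: "finite (simplex_support n t)"
  unfolding simplex_support_def by auto

lemma Omega_nonneg: "t \<in> Omega n \<Longrightarrow> 0 \<le> t i"
  by (cases "i < n") (auto simp: Omega_def)

lemma Omega_mono: "k \<le> m \<Longrightarrow> Omega k \<subseteq> Omega m"
proof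
  fix t assume "k \<le> m" "t \<in> Omega k"
  have "(\<Sum>i<m. t i) = (\<Sum>i<k. t i)"
    using \<open>k \<le> m\<close> \<open>t \<in> Omega k\<close> by (intro sum.mono_neutral_right) (auto simp: Omega_def)
  then show "t \<in> Omega m"
    using \<open>k \<le> m\<close> \<open>t \<in> Omega k\<close> Omega_nonneg[OF \<open>t \<in> Omega k\<close>] by (auto simp: Omega_def)
qed

lemma unitv_in_Omega: "i < n \<Longrightarrow> unitv i \<in> Omega n"
  by (auto simp: Omega_def unitv_def)

lemma sum_simplex_support:
  assumes "t \<in> Omega n"
  shows "(\<Sum>i\<in>simplex_support n t. t i) = 1"
proof -
  have "(\<Sum>i\<in>simplex_support n t. t i) = (\<Sum>i<n. t i)"
    by (rule sum.mono_neutral_left) (auto simp: simplex_support_def)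
  with assms show ?thesis by (simp add: Omega_def)
qed

lemma Omega_eq_unitv:
  assumes "t \<in> Omega n" and "t i = 1"
  shows "t = unitv i"
proof
  fix j
  show "t j = unitv i j"
  proof (cases "j = i")
    case False
    have "i \<in> simplex_support n t"
      using assms by (cases "i < n") (auto simp: Omega_def simplex_support_def)
    then have "(\<Sum>l\<in>simplex_support n t - {i}. t l) = 0"
      using assms by (simp add: sum_simplex_support sum_diff1)
    then have "t j = 0" if "j \<in> simplex_support n t"
      using that False assms(1) Omega_nonneg by (subst (asm) sum_nonneg_eq_0_iff) auto
    then show ?thesis
      using False assms(1) by (cases "j < n") (auto simp: simplex_support_def unitv_def Omega_def)
  qed (use assms in \<open>simp add: unitv_def\<close>)
qed

lemma Omega_unitv_or_Omega_int:
  assumes "t \<in> Omega n"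
  obtains l where "l < n" "t = unitv l" | "t \<in> Omega_int n"
proof (cases "\<exists>l<n. t l = 1")
  case True
  then show ?thesis using that(1) Omega_eq_unitv[OF assms] by blast
next
  case False
  have "t l \<le> 1" if "l < n" for l
  proof -
    have "t l \<le> (\<Sum>i<n. t i)"
      using that assms Omega_nonneg by (intro member_le_sum) auto
    with assms show ?thesis by (simp add: Omega_def)
  qed
  with False have "t \<in> Omega_int n"
    using assms by (force simp: Omega_int_def)
  then show ?thesis using that(2) by blast
qed

lemma Omega_int_other_support:
  assumes "t \<in> Omega_int n"
  obtains i where "i \<in> simplex_support n t" "i \<noteq> j"
proof (rule ccontr)
  assume "\<not> thesis"
  with that have "simplex_support n t \<subseteq> {j}" by blast
  moreover have "simplex_support n t \<noteq> {}"
    using sum_simplex_support assms by (fastforce simp: Omega_int_def)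
  ultimately have "simplex_support n t = {j}" by blast
  then show False
    using sum_simplex_support[of t n] assms by (auto simp: Omega_int_def simplex_support_def)
qed

lemma remove_coord_in_Omega:
  assumes "t \<in> Omega n" "i < n" "t i < 1"
  shows "remove_coord t i \<in> Omega n"
proof -
  have "(\<Sum>j<n. remove_coord t i j) = (\<Sum>j\<in>{..<n} - {i}. t j) / (1 - t i)"
    by (simp add: sum_divide_distrib remove_coord_def sum.remove[of "{..<n}" i] \<open>i < n\<close>)
  also have "\<dots> = 1"
    using assms by (simp add: sum_diff1 Omega_def)
  finally show ?thesis
    using assms Omega_nonneg[OF assms(1)] by (auto simp: Omega_def remove_coord_def)
qed

lemma card_support_remove_coord:
  assumes "i \<in> simplex_support n t" "t i < 1"
  shows "card (simplex_support n (remove_coord t i)) < card (simplex_support n t)"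
proof -
  have "simplex_support n (remove_coord t i) = simplex_support n t - {i}"
    using assms(2) by (auto simp: simplex_support_def remove_coord_def)
  with assms(1) show ?thesis by (metis card_Diff1_less finite_simplex_support)
qed

lemma unitv_remove_coord_combination:
  assumes "t i < 1"
  shows "(\<lambda>j. t i * unitv i j + (1 - t i) * remove_coord t i j) = t"
  using assms by (auto simp: unitv_def remove_coord_def)

lemma Psi_unitv: "\<psi> \<in> Psi n \<Longrightarrow> i < n \<Longrightarrow> \<psi> (unitv i) = 1"
  by (simp add: Psi_def)

lemma Psi_remove_coord:
  "\<psi> \<in> Psi n \<Longrightarrow> t \<in> Omega_int n \<Longrightarrow> i < n \<Longrightarrow> (1 - t i) * \<psi> (remove_coord t i) \<le> \<psi> t"
  unfolding Psi_def remove_coord_def by blast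

lemma Psi_le_1:
  assumes "\<psi> \<in> Psi n" "t \<in> Omega n"
  shows "\<psi> t \<le> 1"
  using assms(2)
proof (induction "card (simplex_support n t)" arbitrary: t rule: less_induct)
  case less
  from less.prems show ?case
  proof (cases rule: Omega_unitv_or_Omega_int)
    case 1
    then show ?thesis by (simp add: Psi_unitv[OF assms(1)])
  next
    case 2
    then obtain i where i: "i \<in> simplex_support n t"
      using Omega_int_other_support by blast
    have "i < n" "t i < 1" "0 \<le> t i"
      using i 2 Omega_nonneg[OF less.prems] by (auto simp: simplex_support_def Omega_int_def)
    let ?t' = "remove_coord t i"
    have t': "?t' \<in> Omega n" "\<psi> ?t' \<le> 1"
      using remove_coord_in_Omega less card_support_remove_coord i \<open>i < n\<close> \<open>t i < 1\<close> by auto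
    have "\<psi> t = \<psi> (\<lambda>j. t i * unitv i j + (1 - t i) * ?t' j)"
      using unitv_remove_coord_combination[of t i] \<open>t i < 1\<close> by simp
    also have "\<dots> \<le> t i * \<psi> (unitv i) + (1 - t i) * \<psi> ?t'"
      using assms(1) unitv_in_Omega[OF \<open>i < n\<close>] t'(1) \<open>0 \<le> t i\<close> \<open>t i < 1\<close>
      unfolding Psi_def convex_on_Omega_def by simp
    also have "\<dots> \<le> t i * 1 + (1 - t i) * 1"
      using \<open>i < n\<close> t'(2) \<open>0 \<le> t i\<close> \<open>t i < 1\<close>
      by (intro add_mono mult_left_mono) (simp_all add: Psi_unitv[OF assms(1)])
    finally show ?thesis by simp
  qed
qed

lemma coord_le_Psi:
  assumes "\<psi> \<in> Psi n" "t \<in> Omega n"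
  shows "t j \<le> \<psi> t"
  using assms(2)
proof (induction "card (simplex_support n t)" arbitrary: t rule: less_induct)
  case less
  from less.prems show ?case
  proof (cases rule: Omega_unitv_or_Omega_int)
    case 1
    then show ?thesis by (simp add: Psi_unitv[OF assms(1)]) (simp add: unitv_def)
  next
    case 2
    then obtain i where i: "i \<in> simplex_support n t" "i \<noteq> j"
      using Omega_int_other_support by blast
    have "i < n" "t i < 1"
      using i 2 by (auto simp: simplex_support_def Omega_int_def)
    let ?t' = "remove_coord t i"
    have "t j = (1 - t i) * ?t' j"
      using i \<open>t i < 1\<close> by (simp add: remove_coord_def)
    also have "\<dots> \<le> (1 - t i) * \<psi> ?t'"
      using less remove_coord_in_Omega card_support_remove_coord i \<open>i < n\<close> \<open>t i < 1\<close>
      by (intro mult_left_mono) auto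
    also have "\<dots> \<le> \<psi> t"
      using Psi_remove_coord assms(1) 2 \<open>i < n\<close> by blast
    finally show ?thesis .
  qed
qed

lemma inverse_card_le_Psi:
  assumes "\<psi> \<in> Psi n" "t \<in> Omega n" "0 < n"
  shows "1 / real n \<le> \<psi> t"
proof -
  obtain j where "j < n" "1 / real n \<le> t j"
  proof (rule ccontr)
    assume "\<not> thesis"
    with that have "(\<Sum>j<n. t j) < (\<Sum>j<n. 1 / real n)"
      using assms(3) by (intro sum_strict_mono) force+
    with assms(2,3) show False by (simp add: Omega_def)
  qed
  then show ?thesis by (meson coord_le_Psi[OF assms(1,2)] order_trans)
qed

lemma phibar_eq_on_Omega: "t \<in> Omega (n - 1) \<Longrightarrow> phibar n \<phi> t = \<phi> t"
  unfolding phibar_def by (rule arg_cong[where f = \<phi>]) (auto simp: Omega_def)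

lemma phibar_le_1:
  assumes "\<phi> \<in> Psi n" "t \<in> Omega (n - 1)"
  shows "phibar n \<phi> t \<le> 1"
  using assms Omega_mono[of "n - 1" n] by (auto simp: phibar_eq_on_Omega intro: Psi_le_1)

lemma normalized_norms_in_Omega:
  fixes x :: "nat \<Rightarrow> 'a::real_normed_vector"
  assumes "(\<Sum>i<k. norm (x i)) \<noteq> 0"
  shows "(\<lambda>i. if i < k then norm (x i) / (\<Sum>i<k. norm (x i)) else 0) \<in> Omega k"
  using assms by (auto simp: Omega_def sum_divide_distrib[symmetric] sum_nonneg)

lemma psi_norm_le_sum_norm:
  fixes x :: "nat \<Rightarrow> 'a::real_normed_vector"
  assumes "\<forall>t\<in>Omega k. f t \<le> 1"
  shows "psi_norm k f x \<le> (\<Sum>i<k. norm (x i))"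
proof -
  have "0 \<le> (\<Sum>i<k. norm (x i))" by (simp add: sum_nonneg)
  then show ?thesis
    using assms normalized_norms_in_Omega[of x k] by (auto simp: psi_norm_def Let_def intro: mult_left_le)
qed

lemma sum_norm_le_psi_norm:
  fixes x :: "nat \<Rightarrow> 'a::real_normed_vector"
  assumes "\<forall>t\<in>Omega k. c \<le> f t"
  shows "c * (\<Sum>i<k. norm (x i)) \<le> psi_norm k f x"
proof -
  have "0 \<le> (\<Sum>i<k. norm (x i))" by (simp add: sum_nonneg)
  then show ?thesis
    using assms normalized_norms_in_Omega[of x k]
    by (auto simp: psi_norm_def Let_def mult.commute[of c] intro: mult_left_mono)
qed

lemma psi_norm_phibar_le_sum_norm:
  fixes y :: "nat \<Rightarrow> 'a::real_normed_vector"
  assumes "\<phi> \<in> Psi n"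
  shows "psi_norm (n - 1) (phibar n \<phi>) y \<le> (\<Sum>i<n - 1. norm (y i))"
  using phibar_le_1[OF assms] by (blast intro: psi_norm_le_sum_norm)

theorem proposition5p5:
  fixes n :: nat and \<psi> \<phi> :: "(nat \<Rightarrow> real) \<Rightarrow> real"
  assumes "2 \<le> n" and "\<psi> \<in> Psi n" and "\<phi> \<in> Psi n"
  shows "\<exists>\<kappa>>0. \<forall>x :: nat \<Rightarrow> 'a::real_normed_vector.
           max (max (psi_norm (n - 1) (phibar n \<phi>) x)
                    (psi_norm (n - 1) (phibar n \<phi>) (\<lambda>_. x (n - 1))))
               (norm (x (n - 1)))
           \<le> \<kappa> * psi_norm n \<psi> x"
proof (intro exI conjI allI)
  show "real n * (real n - 1) > 0" using assms(1) by simp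
  fix x :: "nat \<Rightarrow> 'a"
  define S where "S = (\<Sum>i<n. norm (x i))"
  have S_split: "S = (\<Sum>i<n - 1. norm (x i)) + norm (x (n - 1))"
    unfolding S_def using assms(1) sum.lessThan_Suc[of "\<lambda>i. norm (x i)" "n - 1"] by simp
  have "0 \<le> (\<Sum>i<n - 1. norm (x i))" by (simp add: sum_nonneg)
  with S_split have S_ge: "S \<le> (real n - 1) * S" "norm (x (n - 1)) \<le> S"
    using assms(1) mult_right_mono[of 1 "real n - 1" S] by auto
  have "psi_norm (n - 1) (phibar n \<phi>) x \<le> S"
    using psi_norm_phibar_le_sum_norm[OF assms(3), of x] S_split norm_ge_zero[of "x (n - 1)"]
    by linarith
  moreover have "psi_norm (n - 1) (phibar n \<phi>) (\<lambda>_. x (n - 1)) \<le> (real n - 1) * norm (x (n - 1))"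
    using psi_norm_phibar_le_sum_norm[OF assms(3), of "\<lambda>_. x (n - 1)"] assms(1)
    by (simp add: of_nat_diff)
  moreover have "(real n - 1) * norm (x (n - 1)) \<le> (real n - 1) * S"
    using S_ge(2) assms(1) by (intro mult_left_mono) auto
  moreover have "S \<le> real n * psi_norm n \<psi> x"
    using sum_norm_le_psi_norm[of n "1 / real n" \<psi> x] inverse_card_le_Psi[OF assms(2)] assms(1)
    by (force simp: S_def field_simps)
  then have "(real n - 1) * S \<le> real n * (real n - 1) * psi_norm n \<psi> x"
    using assms(1) by (simp add: mult_left_mono mult.left_commute)
  ultimately show "max (max (psi_norm (n - 1) (phibar n \<phi>) x)
                    (psi_norm (n - 1) (phibar n \<phi>) (\<lambda>_. x (n - 1))))
               (norm (x (n - 1))) \<le> real n * (real n - 1) * psi_norm n \<psi> x"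
    using S_ge by simp
qed

end
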